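(* In the standing setup with a single fluid, and with $t_{\mathrm b},\xi_0,t_0$ as in the time-interval setup, write $h_{\mathrm b}=h(t_{\mathrm b})$, $x_{\mathrm b}=x(t_{\mathrm b})$. Then for all $t\in[t_{\mathrm b},t_0]$, $$|x(t)|\ \le\ \frac{1}{\big[1+\xi_0h_{\mathrm b}(t-t_{\mathrm b})\big]^{\frac{1}{\xi_0}-1}}\Big[|x_{\mathrm b}|-\frac{\sqrt2\,c\,l}{h_{\mathrm b}}\Big]+\sqrt2\,c\,l\Big[\xi_0(t-t_{\mathrm b})+\frac{1}{h_{\mathrm b}}\Big].$$
   Context: Standing setup. Fix real constants $c>0$ and $l>0$, a nonempty finite index set $A$, and constants $w_\alpha\in[-1,1]$ for $\alpha\in A$. Let $I\subseteq\mathbb{R}$ be an interval and let $x,y_{\mathrm r},y_{\mathrm i},h,z_\alpha$ ($\alpha\in A$) be real $C^1$ functions of $t\in I$ with $h>0$ and $z_\alpha\ge 0$. Define $\xi(t)=x(t)^2+\sum_{\beta\in A}\frac{1+w_\beta}{2}z_\beta(t)^2$. Assume that on $I$: $\dot x=\big[-x+4c\,y_{\mathrm r}y_{\mathrm i}+x\,\xi\big]h$, $\dot y_{\mathrm r}=\big[\xi\,y_{\mathrm r}-c\,x\,y_{\mathrm i}\big]h$, $\dot y_{\mathrm i}=\big[\xi\,y_{\mathrm i}+c\,x\,y_{\mathrm r}\big]h$, $\dot z_\alpha=\big[-\tfrac{1+w_\alpha}{2}+\xi\big]z_\alpha h$, $\dot h=-\xi h^2$, together with the constraints $x^2+4y_{\mathrm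 r}^2+\sum_{\beta\in A}z_\beta^2=1$ and $y_{\mathrm r}^2+y_{\mathrm i}^2=\frac{l^2}{2h^2}$. Single fluid: $A$ has exactly one element; write $z$ and $w$ for $z_\alpha$ and $w_\alpha$. Time-interval setup: let $t_{\mathrm b}\in I$, $\xi_{\mathrm b}:=\xi(t_{\mathrm b})$, and let $\xi_0$ be a real number with $\xi_0>0$ and $\xi_{\mathrm b}\le\xi_0\le\frac{1+w}{2}$. Assume the set $\{t\in I:\ t\ge t_{\mathrm b},\ \xi(t)=\xi_0\}$ is nonempty and let $t_0$ be its minimum (so $\xi(t)\le\xi_0$ for all $t\in[t_{\mathrm b},t_0]$); put $\Delta t_{\mathrm b0}=t_0-t_{\mathrm b}$. *)

theory Defs
  imports "HOL-Analysis.Analysis"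
begin

definition xi1 :: "real \<Rightarrow> (real \<Rightarrow> real) \<Rightarrow> (real \<Rightarrow> real) \<Rightarrow> real \<Rightarrow> real" where
  "xi1 w x z t = (x t)\<^sup>2 + (1 + w) / 2 * (z t)\<^sup>2"

definition C1_on :: "real set \<Rightarrow> (real \<Rightarrow> real) \<Rightarrow> (real \<Rightarrow> real) \<Rightarrow> bool" where
  "C1_on I f f' \<longleftrightarrow> (\<forall>t\<in>I. (f has_real_derivative f' t) (at t within I)) \<and> continuous_on I f'"

end

theory Submission
  imports Defs
begin

text \<open>Up to time \<open>t0\<close> the quantity \<open>\<xi>\<close> stays below \<open>\<xi>0\<close>, so \<open>(1/h)' = \<xi> \<le> \<xi>0\<close> gives
  \<open>h t \<ge> hb / u t\<close> with \<open>u t = 1 + \<xi>0 hb (t - tb)\<close>. The two constraints bound the source term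
  \<open>4 c yr yi h\<close> of the \<open>x\<close>-equation by \<open>K = \<surd>2 c l\<close>, hence \<open>y = \<plusminus>x\<close> satisfies
  \<open>y' \<le> K - (1 - \<xi>0) hb / u t * y\<close> wherever \<open>y > 0\<close>. A comparison argument against the explicit
  solution \<open>B\<close> of the linear equation \<open>B' = K - (1 - \<xi>0) hb / u t * B\<close> with \<open>B tb = \<bar>x tb\<bar>\<close>
  bounds \<open>\<bar>x\<bar>\<close> by \<open>B\<close>, which is the right-hand side of the claim.\<close>

lemma C1_on_has_real_derivative_within:
  assumes "C1_on I f f'" "J \<subseteq> I" "t \<in> J"
  shows "(f has_real_derivative f' t) (at t within J)"
  using assms unfolding C1_on_def by (meson DERIV_subset subsetD)

lemma C1_on_continuous_on:
  assumes "C1_on I f f'" "J \<subseteq> I"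
  shows "continuous_on J f"
  using C1_on_has_real_derivative_within[OF assms]
  by (meson DERIV_continuous continuous_on_eq_continuous_within)

lemma nonpos_if_deriv_nonpos_where_pos:
  fixes D D' :: "real \<Rightarrow> real"
  assumes deriv: "\<And>t. t \<in> {a..b} \<Longrightarrow> (D has_real_derivative D' t) (at t within {a..b})"
    and start: "D a \<le> 0"
    and nonpos: "\<And>t. t \<in> {a..b} \<Longrightarrow> D t > 0 \<Longrightarrow> D' t \<le> 0"
    and t: "t \<in> {a..b}"
  shows "D t \<le> 0"
proof (rule ccontr)
  assume "\<not> D t \<le> 0"
  then have pos_t: "D t > 0" by simp
  have "continuous_on {a..b} D"
    using deriv by (meson DERIV_continuous continuous_on_eq_continuous_within)
  then have "continuous_on {a..t} D"
    using t by (auto intro: continuous_on_subset)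
  define S where "S = {s \<in> {a..t}. D s \<le> 0}"
  define s where "s = Sup S"
  have "closed S"
    unfolding S_def by (rule continuous_on_closed_Collect_le) (use \<open>continuous_on {a..t} D\<close> in auto)
  moreover have "a \<in> S" using start t by (auto simp: S_def)
  moreover have S_bdd: "bdd_above S" by (auto simp: S_def bdd_above_def)
  ultimately have "s \<in> S" unfolding s_def using closed_contains_Sup by blast
  then have s: "a \<le> s" "s < t" "D s \<le> 0"
    using pos_t by (auto simp: S_def less_le)
  have pos_after_s: "D r > 0" if "s < r" "r \<le> t" for r
  proof (rule ccontr)
    assume "\<not> D r > 0"
    then have "r \<in> S" using that s by (auto simp: S_def)
    then have "r \<le> s" unfolding s_def using S_bdd by (rule cSup_upper)
    then show False using that by simp
  qed
  have sub: "{s..t} \<subseteq> {a..b}" using s t by auto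
  have "\<exists>r\<in>{s<..<t}. D t - D s = (\<lambda>d. d * D' r) (t - s)"
  proof (rule mvt_simple[OF \<open>s < t\<close>])
    fix r assume "s \<le> r" "r \<le> t"
    then have "(D has_real_derivative D' r) (at r within {s..t})"
      using DERIV_subset[OF deriv sub] sub by auto
    then show "(D has_derivative (\<lambda>d. d * D' r)) (at r within {s..t})"
      by (simp add: has_field_derivative_def mult_commute_abs)
  qed
  then obtain r where r: "s < r" "r < t" "D t - D s = (t - s) * D' r" by auto
  have "D' r \<le> 0" using nonpos[of r] pos_after_s[of r] r sub by auto
  then have "D t \<le> D s" using r mult_nonneg_nonpos[of "t - s" "D' r"] by linarith
  then show False using s pos_t by linarith
qed

lemma le_before_first_crossing:
  fixes f :: "real \<Rightarrow> real"
  assumes cont: "continuous_on {a..b} f" and start: "f a \<le> c"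
    and first: "\<And>s. s \<in> {a..b} \<Longrightarrow> f s = c \<Longrightarrow> s = b"
    and t: "t \<in> {a..b}"
  shows "f t \<le> c"
proof (rule ccontr)
  assume "\<not> f t \<le> c"
  moreover have "continuous_on {a..t} f" using cont t by (auto intro: continuous_on_subset)
  ultimately obtain s where "a \<le> s" "s \<le> t" "f s = c"
    using IVT'[of f a c t] start t by auto
  then show False using first[of s] t \<open>\<not> f t \<le> c\<close> by auto
qed

lemma lower_bound_if_deriv_ge_neg_square:
  fixes h h' :: "real \<Rightarrow> real"
  assumes deriv: "\<And>t. t \<in> {a..b} \<Longrightarrow> (h has_real_derivative h' t) (at t within {a..b})"
    and pos: "\<And>t. t \<in> {a..b} \<Longrightarrow> h t > 0"
    and deriv_ge: "\<And>t. t \<in> {a..b} \<Longrightarrow> - e * (h t)\<^sup>2 \<le> h' t"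
    and "e \<ge> 0" and t: "t \<in> {a..b}"
  shows "h a / (1 + e * h a * (t - a)) \<le> h t"
proof -
  have ha: "h a > 0" using pos t by auto
  have "1 / h t - 1 / h a - e * (t - a) \<le> 0"
  proof (rule nonpos_if_deriv_nonpos_where_pos[OF _ _ _ t])
    fix r assume r: "r \<in> {a..b}"
    show "((\<lambda>r. 1 / h r - 1 / h a - e * (r - a)) has_real_derivative - h' r / (h r)\<^sup>2 - e)
        (at r within {a..b})"
      using deriv[OF r] pos[OF r] by (auto intro!: derivative_eq_intros simp: power2_eq_square)
    show "- h' r / (h r)\<^sup>2 - e \<le> 0"
      using deriv_ge[OF r] pos[OF r] by (simp add: field_simps)
  qed simp
  then have "1 / h t \<le> (1 + e * h a * (t - a)) / h a"
    using ha by (simp add: field_simps)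
  moreover have "0 < 1 + e * h a * (t - a)"
    using ha \<open>e \<ge> 0\<close> t by (simp add: add_pos_nonneg)
  ultimately show ?thesis
    using ha pos[OF t] by (simp add: field_simps)
qed

lemma damping_rate_lower_bound:
  fixes h h' \<xi> :: "real \<Rightarrow> real"
  assumes deriv: "\<And>t. t \<in> {a..b} \<Longrightarrow> (h has_real_derivative h' t) (at t within {a..b})"
    and pos: "\<And>t. t \<in> {a..b} \<Longrightarrow> h t > 0"
    and riccati: "\<And>t. t \<in> {a..b} \<Longrightarrow> h' t = - \<xi> t * (h t)\<^sup>2"
    and \<xi>_le: "\<And>t. t \<in> {a..b} \<Longrightarrow> \<xi> t \<le> e"
    and "0 \<le> e" "e \<le> 1" and t: "t \<in> {a..b}"
  shows "(1 - e) * h a / (1 + e * h a * (t - a)) \<le> (1 - \<xi> t) * h t"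
proof -
  have "h a / (1 + e * h a * (t - a)) \<le> h t"
  proof (rule lower_bound_if_deriv_ge_neg_square[OF deriv pos _ \<open>0 \<le> e\<close> t])
    show "- e * (h r)\<^sup>2 \<le> h' r" if "r \<in> {a..b}" for r
      using riccati[OF that] mult_right_mono[OF \<xi>_le[OF that] zero_le_power2[of "h r"]] by simp
  qed
  then have "(1 - e) * h a / (1 + e * h a * (t - a)) \<le> (1 - e) * h t"
    using \<open>e \<le> 1\<close> by (simp add: mult_left_mono flip: times_divide_eq_right)
  also have "\<dots> \<le> (1 - \<xi> t) * h t"
    using \<xi>_le[OF t] pos[OF t] by (simp add: mult_right_mono)
  finally show ?thesis .
qed

lemma source_term_bound:
  fixes c l x yr yi z h :: real
  assumes "c \<ge> 0" "l \<ge> 0" "h > 0"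
    and constr1: "x\<^sup>2 + 4 * yr\<^sup>2 + z\<^sup>2 = 1" and constr2: "yr\<^sup>2 + yi\<^sup>2 = l\<^sup>2 / (2 * h\<^sup>2)"
  shows "\<bar>4 * c * yr * yi * h\<bar> \<le> sqrt 2 * c * l"
proof -
  have "yr\<^sup>2 \<le> 1 / 4"
    using constr1 zero_le_power2[of x] zero_le_power2[of z] by linarith
  moreover have "(yi * h)\<^sup>2 \<le> l\<^sup>2 / 2"
  proof -
    have "yi\<^sup>2 \<le> l\<^sup>2 / (2 * h\<^sup>2)" using constr2 zero_le_power2[of yr] by linarith
    then show ?thesis using \<open>h > 0\<close> by (simp add: power_mult_distrib field_simps)
  qed
  ultimately have "16 * c\<^sup>2 * yr\<^sup>2 * (yi * h)\<^sup>2 \<le> 16 * c\<^sup>2 * (1 / 4) * (l\<^sup>2 / 2)"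
    by (intro mult_mono mult_left_mono) auto
  then have "(4 * c * yr * yi * h)\<^sup>2 \<le> 16 * c\<^sup>2 * (1 / 4) * (l\<^sup>2 / 2)"
    by (simp add: power_mult_distrib)
  also have "\<dots> = (sqrt 2 * c * l)\<^sup>2" by (simp add: power_mult_distrib)
  finally have "\<bar>4 * c * yr * yi * h\<bar> \<le> \<bar>sqrt 2 * c * l\<bar>"
    by (simp only: abs_le_square_iff)
  then show ?thesis
    using assms(1,2) by simp
qed

definition decay_bound :: "real \<Rightarrow> real \<Rightarrow> real \<Rightarrow> real \<Rightarrow> real \<Rightarrow> real \<Rightarrow> real" where
  "decay_bound a e hb K C t =
     1 / (1 + e * hb * (t - a)) powr (1 / e - 1) * C + K * (e * (t - a) + 1 / hb)"

lemma decay_bound_start [simp]: "decay_bound a e hb K C a = C + K / hb"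
  by (simp add: decay_bound_def)

lemma decay_bound_has_real_derivative:
  assumes "e > 0" "hb > 0" and u_pos: "0 < 1 + e * hb * (t - a)"
  shows "(decay_bound a e hb K C has_real_derivative
      K - (1 - e) * hb / (1 + e * hb * (t - a)) * decay_bound a e hb K C t) (at t within S)"
proof -
  define u where "u = (\<lambda>t. 1 + e * hb * (t - a))"
  define p where "p = 1 / e - 1"
  define q where "q = 1 / u t powr p"
  have ut: "u t = 1 + e * hb * (t - a)" by (simp add: u_def)
  have ut_pos: "u t > 0" using u_pos by (simp add: ut)
  have pe: "p * e = 1 - e" using \<open>e > 0\<close> by (simp add: p_def field_simps)
  have "(u has_real_derivative e * hb) (at t)"
    unfolding u_def by (auto intro!: derivative_eq_intros)
  then have "((\<lambda>t. u t powr (- p)) has_real_derivative - p * u t powr (- p - 1) * (e * hb)) (at t)"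
    using DERIV_fun_powr[of u "e * hb" t "- p"] ut_pos by simp
  moreover have "- p * u t powr (- p - 1) * (e * hb) = - (1 - e) * hb / u t * q"
    using ut_pos by (simp add: q_def powr_diff powr_minus_divide mult_ac flip: pe)
  ultimately have "((\<lambda>t. 1 / u t powr p) has_real_derivative - (1 - e) * hb / u t * q) (at t)"
    by (simp add: powr_minus_divide)
  then have "((\<lambda>t. 1 / u t powr p * C + K * (e * (t - a) + 1 / hb)) has_real_derivative
      - (1 - e) * hb / u t * q * C + K * e) (at t)"
    by (rule DERIV_add[OF DERIV_cmult_right]) (auto intro!: derivative_eq_intros)
  moreover have "decay_bound a e hb K C = (\<lambda>t. 1 / u t powr p * C + K * (e * (t - a) + 1 / hb))"
    by (simp add: fun_eq_iff decay_bound_def u_def p_def)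
  moreover have "K * (e * (t - a) + 1 / hb) = K * u t / hb"
    using \<open>hb > 0\<close> by (simp add: ut field_simps)
  moreover have "- (1 - e) * hb / u t * q * C + K * e = K - (1 - e) * hb / u t * (q * C + K * u t / hb)"
    using ut_pos \<open>hb > 0\<close> by (simp add: field_simps)
  ultimately show ?thesis
    by (simp add: q_def has_field_derivative_at_within flip: ut)
qed

lemma decay_bound_nonneg:
  assumes "0 < e" "e \<le> 1" "0 < hb" "0 \<le> K" "a \<le> t" "- K / hb \<le> C"
  shows "0 \<le> decay_bound a e hb K C t"
proof -
  define q where "q = 1 / (1 + e * hb * (t - a)) powr (1 / e - 1)"
  have "1 \<le> (1 + e * hb * (t - a)) powr (1 / e - 1)"
    using assms by (intro ge_one_powr_ge_zero) (auto simp: field_simps)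
  then have q: "0 \<le> q" "q \<le> 1" by (auto simp: q_def divide_le_eq)
  have "q * (K / hb) \<le> K / hb"
    using q assms by (intro mult_left_le_one_le) auto
  moreover have "0 \<le> q * (C + K / hb)"
    using q assms by simp
  moreover have "0 \<le> K * (e * (t - a))"
    using assms by simp
  ultimately show ?thesis
    by (simp add: decay_bound_def flip: q_def) (simp add: algebra_simps)
qed

lemma le_decay_bound:
  fixes y y' \<gamma> :: "real \<Rightarrow> real"
  assumes deriv: "\<And>t. t \<in> {a..b} \<Longrightarrow> (y has_real_derivative y' t) (at t within {a..b})"
    and deriv_le: "\<And>t. t \<in> {a..b} \<Longrightarrow> y' t \<le> K - \<gamma> t * y t"
    and damping: "\<And>t. t \<in> {a..b} \<Longrightarrow> (1 - e) * hb / (1 + e * hb * (t - a)) \<le> \<gamma> t"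
    and "0 < e" "e \<le> 1" "0 < hb" "0 \<le> K" and t: "t \<in> {a..b}"
  shows "y t \<le> decay_bound a e hb K (\<bar>y a\<bar> - K / hb) t"
proof -
  define B where "B = decay_bound a e hb K (\<bar>y a\<bar> - K / hb)"
  define \<rho> where "\<rho> = (\<lambda>t. (1 - e) * hb / (1 + e * hb * (t - a)))"
  have u_pos: "0 < 1 + e * hb * (r - a)" if "r \<in> {a..b}" for r
    using that assms by (simp add: add_pos_nonneg)
  have "y t - B t \<le> 0"
  proof (rule nonpos_if_deriv_nonpos_where_pos
      [where D = "\<lambda>r. y r - B r" and D' = "\<lambda>r. y' r - (K - \<rho> r * B r)", OF _ _ _ t])
    fix r assume r: "r \<in> {a..b}"
    show "((\<lambda>r. y r - B r) has_real_derivative y' r - (K - \<rho> r * B r)) (at r within {a..b})"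
      unfolding B_def \<rho>_def
      by (intro DERIV_diff deriv[OF r] decay_bound_has_real_derivative u_pos[OF r]) (use assms in auto)
  next
    fix r assume r: "r \<in> {a..b}" and "0 < y r - B r"
    moreover have "0 \<le> B r"
      unfolding B_def using r assms by (intro decay_bound_nonneg) auto
    moreover have "0 \<le> \<rho> r"
      unfolding \<rho>_def using u_pos[OF r] assms by simp
    ultimately have "\<rho> r * B r \<le> \<gamma> r * y r"
      using damping[OF r] mult_left_mono[of "B r" "y r" "\<rho> r"] mult_right_mono[of "\<rho> r" "\<gamma> r" "y r"]
      by (simp add: \<rho>_def)
    then show "y' r - (K - \<rho> r * B r) \<le> 0"
      using deriv_le[OF r] by linarith
  qed (simp add: B_def)
  then show ?thesis by (simp add: B_def)
qed

lemma abs_le_decay_bound: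
  fixes x x' g \<gamma> :: "real \<Rightarrow> real"
  assumes deriv: "\<And>t. t \<in> {a..b} \<Longrightarrow> (x has_real_derivative x' t) (at t within {a..b})"
    and ode: "\<And>t. t \<in> {a..b} \<Longrightarrow> x' t = g t - \<gamma> t * x t"
    and source: "\<And>t. t \<in> {a..b} \<Longrightarrow> \<bar>g t\<bar> \<le> K"
    and damping: "\<And>t. t \<in> {a..b} \<Longrightarrow> (1 - e) * hb / (1 + e * hb * (t - a)) \<le> \<gamma> t"
    and "0 < e" "e \<le> 1" "0 < hb" and t: "t \<in> {a..b}"
  shows "\<bar>x t\<bar> \<le> decay_bound a e hb K (\<bar>x a\<bar> - K / hb) t"
proof -
  have "0 \<le> K" using source[OF t] by linarith
  have "x t \<le> decay_bound a e hb K (\<bar>x a\<bar> - K / hb) t"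
  proof (rule le_decay_bound[OF deriv _ damping])
    show "x' r \<le> K - \<gamma> r * x r" if "r \<in> {a..b}" for r
      using ode[OF that] source[OF that] by linarith
  qed (use assms \<open>0 \<le> K\<close> in auto)
  moreover have "- x t \<le> decay_bound a e hb K (\<bar>- x a\<bar> - K / hb) t"
  proof (rule le_decay_bound[where y' = "\<lambda>t. - x' t", OF DERIV_minus[OF deriv] _ damping])
    show "- x' r \<le> K - \<gamma> r * - x r" if "r \<in> {a..b}" for r
      using ode[OF that] source[OF that] by linarith
  qed (use assms \<open>0 \<le> K\<close> in auto)
  ultimately show ?thesis by simp
qed

theorem corollaryB2:
  fixes c l w :: real and I :: "real set"
    and x yr yi h z x' yr' yi' h' z' :: "real \<Rightarrow> real"
    and tb t0 \<xi>0 :: real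
  assumes c_pos: "c > 0" and l_pos: "l > 0"
    and w_range: "-1 \<le> w" "w \<le> 1"
    and I_int: "is_interval I"
    and C1: "C1_on I x x'" "C1_on I yr yr'" "C1_on I yi yi'" "C1_on I h h'" "C1_on I z z'"
    and h_pos: "\<forall>t\<in>I. h t > 0"
    and z_nonneg: "\<forall>t\<in>I. z t \<ge> 0"
    and ode_x: "\<forall>t\<in>I. x' t = (- x t + 4 * c * yr t * yi t + x t * xi1 w x z t) * h t"
    and ode_yr: "\<forall>t\<in>I. yr' t = (xi1 w x z t * yr t - c * x t * yi t) * h t"
    and ode_yi: "\<forall>t\<in>I. yi' t = (xi1 w x z t * yi t + c * x t * yr t) * h t"
    and ode_z: "\<forall>t\<in>I. z' t = (- (1 + w) / 2 + xi1 w x z t) * z t * h t"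
    and ode_h: "\<forall>t\<in>I. h' t = - xi1 w x z t * (h t)\<^sup>2"
    and constr1: "\<forall>t\<in>I. (x t)\<^sup>2 + 4 * (yr t)\<^sup>2 + (z t)\<^sup>2 = 1"
    and constr2: "\<forall>t\<in>I. (yr t)\<^sup>2 + (yi t)\<^sup>2 = l\<^sup>2 / (2 * (h t)\<^sup>2)"
    and tb_in: "tb \<in> I"
    and xi0_pos: "\<xi>0 > 0"
    and xi0_ge: "xi1 w x z tb \<le> \<xi>0"
    and xi0_le: "\<xi>0 \<le> (1 + w) / 2"
    and t0_in: "t0 \<in> I" and t0_ge: "tb \<le> t0" and xi_t0: "xi1 w x z t0 = \<xi>0"
    and t0_min: "\<forall>t\<in>I. tb \<le> t \<and> xi1 w x z t = \<xi>0 \<longrightarrow> t0 \<le> t"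
  shows "\<forall>t\<in>{tb..t0}.
    \<bar>x t\<bar> \<le> 1 / (1 + \<xi>0 * h tb * (t - tb)) powr (1 / \<xi>0 - 1)
                * (\<bar>x tb\<bar> - sqrt 2 * c * l / h tb)
             + sqrt 2 * c * l * (\<xi>0 * (t - tb) + 1 / h tb)"
proof -
  define \<xi> where "\<xi> = xi1 w x z"
  define K where "K = sqrt 2 * c * l"
  have sub: "{tb..t0} \<subseteq> I"
    using mem_is_interval_1_I[OF I_int tb_in t0_in] by auto
  note deriv = C1_on_has_real_derivative_within[OF _ sub]
  have "continuous_on {tb..t0} \<xi>"
    unfolding \<xi>_def xi1_def
    using C1_on_continuous_on[OF C1(1) sub] C1_on_continuous_on[OF C1(5) sub]
    by (intro continuous_intros)
  then have \<xi>_le: "\<xi> t \<le> \<xi>0" if "t \<in> {tb..t0}" for t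
    by (rule le_before_first_crossing[OF _ _ _ that]) (use xi0_ge t0_min sub in \<open>force simp: \<xi>_def\<close>)+
  have damping: "(1 - \<xi>0) * h tb / (1 + \<xi>0 * h tb * (t - tb)) \<le> (1 - \<xi> t) * h t"
    if "t \<in> {tb..t0}" for t
    by (rule damping_rate_lower_bound[OF deriv[OF C1(4)] _ _ \<xi>_le _ _ that])
      (use h_pos ode_h sub xi0_pos xi0_le w_range in \<open>auto simp: \<xi>_def\<close>)
  have "\<bar>x t\<bar> \<le> decay_bound tb \<xi>0 (h tb) K (\<bar>x tb\<bar> - K / h tb) t" if "t \<in> {tb..t0}" for t
  proof (rule abs_le_decay_bound[OF deriv[OF C1(1)] _ _ damping _ _ _ that])
    fix r assume r: "r \<in> {tb..t0}"
    show "x' r = 4 * c * yr r * yi r * h r - (1 - \<xi> r) * h r * x r"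
      using ode_x r sub by (auto simp: \<xi>_def algebra_simps)
    show "\<bar>4 * c * yr r * yi r * h r\<bar> \<le> K"
      unfolding K_def using r sub c_pos l_pos h_pos constr1 constr2 by (intro source_term_bound) auto
  qed (use xi0_pos xi0_le w_range h_pos tb_in in auto)
  then show ?thesis by (simp add: decay_bound_def K_def)
qed

end
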